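(* Let $\varepsilon\in(0,1)$ be irrational and let $b,M$ be integers with $b\ge1$ and $2b\le M$. Then the number of distinct $b$-amicable pairs $(w^{(1)},w^{(2)})$ with $w^{(1)},w^{(2)}\in\mathcal{L}_M(\varepsilon)$ is at most $M-b$.
   Context: For irrational $\varepsilon\in(0,1)$, let $T_\varepsilon:[0,1)\to[0,1)$, $T_\varepsilon(x)=x+1-\varepsilon$ on $[0,\varepsilon)$ and $x-\varepsilon$ on $[\varepsilon,1)$; the coding $u_{\varepsilon,x_0}\in\{0,1\}^{\mathbb{Z}}$ has $u_n=0$ if $T^n_\varepsilon(x_0)\in[0,\varepsilon)$ and $1$ otherwise. $\mathcal{L}_M(\varepsilon)$ is the set of length-$M$ factors of $u_{\varepsilon,x_0}$ (independent of $x_0$). 3iet words: for irrational $\varepsilon\in(0,1)$ and $\max\{\varepsilon,1-\varepsilon\}<\ell<1$, let $T_{\varepsilon,\ell}$ on $[0,\ell)$ be $x\mapsto x+1-\varepsilon$ on $I_A=[0,\ell-1+\varepsilon)$, $x\mapsto x+1-2\varepsilon$ on $I_B=[\ell-1+\varepsilon,\varepsilon)$, $x\mapsto x-\varepsilon$ on $I_C=[\varepsilon,\ell)$; the word $u_{\varepsilon,\ell,x_0}\in\{A,B,C\}^{\mathbb{Z}}$ has $u_n=X$ iff $T^n_{\varepsilon,\ell}(x_0)\in I_X$. A 3iet factor is a finite factor of some such word. Morphisms $\sigma_{01},\sigma_{10}:\{A,B,C\}^*\to\{0,1\}^*$: $\sigma_{01}(A)=0,\sigma_{01}(B)=01,\sigma_{01}(C)=1$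 and $\sigma_{10}(A)=0,\sigma_{10}(B)=10,\sigma_{10}(C)=1$. Two words $w^{(1)},w^{(2)}\in\{0,1\}^*$ form a $b$-amicable pair if there is a 3iet factor $w$ with exactly $b$ letters $B$ such that $w^{(1)}=\sigma_{01}(w)$ and $w^{(2)}=\sigma_{10}(w)$. *)

theory Defs
  imports Complex_Main
begin

definition zpow_on :: "'a set \<Rightarrow> ('a \<Rightarrow> 'a) \<Rightarrow> int \<Rightarrow> 'a \<Rightarrow> 'a" where
  "zpow_on S f n x = (if 0 \<le> n then (f ^^ nat n) x else (the_inv_into S f ^^ nat (- n)) x)"

definition rot :: "real \<Rightarrow> real \<Rightarrow> real" where
  "rot eps x = (if x < eps then x + 1 - eps else x - eps)"

definition rot_word :: "real \<Rightarrow> real \<Rightarrow> int \<Rightarrow> nat" where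
  "rot_word eps x0 n = (if zpow_on {0..<1} (rot eps) n x0 < eps then 0 else 1)"

definition LM :: "real \<Rightarrow> real \<Rightarrow> nat \<Rightarrow> nat list set" where
  "LM eps x0 M = {map (\<lambda>i. rot_word eps x0 (k + int i)) [0..<M] | k. True}"

datatype abc = A | B | C

definition iet3 :: "real \<Rightarrow> real \<Rightarrow> real \<Rightarrow> real" where
  "iet3 eps l x = (if x < l - 1 + eps then x + 1 - eps
                   else if x < eps then x + 1 - 2 * eps else x - eps)"

definition iet3_letter :: "real \<Rightarrow> real \<Rightarrow> real \<Rightarrow> abc" where
  "iet3_letter eps l y = (if y < l - 1 + eps then A else if y < eps then B else C)"

definition iet3_word :: "real \<Rightarrow> real \<Rightarrow> real \<Rightarrow> int \<Rightarrow> abc" where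
  "iet3_word eps l x0 n = iet3_letter eps l (zpow_on {0..<l} (iet3 eps l) n x0)"

definition iet3_factor :: "abc list \<Rightarrow> bool" where
  "iet3_factor w \<longleftrightarrow> (\<exists>eps l x0 k. eps \<notin> \<rat> \<and> 0 < eps \<and> eps < 1 \<and>
       max eps (1 - eps) < l \<and> l < 1 \<and> 0 \<le> x0 \<and> x0 < l \<and>
       w = map (\<lambda>i. iet3_word eps l x0 (k + int i)) [0..<length w])"

fun s01 :: "abc \<Rightarrow> nat list" where
  "s01 A = [0]" | "s01 B = [0, 1]" | "s01 C = [1]"

fun s10 :: "abc \<Rightarrow> nat list" where
  "s10 A = [0]" | "s10 B = [1, 0]" | "s10 C = [1]"

definition sigma01 :: "abc list \<Rightarrow> nat list" where
  "sigma01 w = concat (map s01 w)"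

definition sigma10 :: "abc list \<Rightarrow> nat list" where
  "sigma10 w = concat (map s10 w)"

definition amicable :: "nat \<Rightarrow> nat list \<Rightarrow> nat list \<Rightarrow> bool" where
  "amicable b w1 w2 \<longleftrightarrow> (\<exists>w. iet3_factor w \<and> count_list w B = b \<and>
       w1 = sigma01 w \<and> w2 = sigma10 w)"

end

theory Submission
  imports Defs
begin

text \<open>
  Every length-M factor of the coding of the rotation is the coding of the orbit of a point y
  of [0, 1), and it only depends on the rank of y, the number of cut points frac (j eps),
  j <= M, lying at or below y. Letter k of the codings of y <= y' differs iff exactly one of the
  cut points k, k + 1 lies in (y, y']. If the codings are sigma01 w and sigma10 w, they differ
  exactly on the two positions covered by each letter B of w; reading the word from left to
  right this forces y < y' (here b >= 1 is needed), and (y, y'] contains exactly the b cut points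
  j + 1 with j the start of a B, but not the cut point M. So the pair is determined by the rank n
  of y, the rank of y' is n + b, and n lies in [1, M + 1 - b] with the window (n, n + b] avoiding
  the rank of the cut point M, which rules out at least one value.
\<close>

section \<open>The morphisms sigma01 and sigma10\<close>

lemma sigma01_Nil [simp]: "sigma01 [] = []"
  by (simp add: sigma01_def)

lemma sigma10_Nil [simp]: "sigma10 [] = []"
  by (simp add: sigma10_def)

lemma sigma01_Cons [simp]: "sigma01 (a # w) = s01 a @ sigma01 w"
  by (simp add: sigma01_def)

lemma sigma10_Cons [simp]: "sigma10 (a # w) = s10 a @ sigma10 w"
  by (simp add: sigma10_def)

lemma length_s10 [simp]: "length (s10 a) = length (s01 a)"
  by (cases a) simp_all

lemma length_sigma10: "length (sigma10 w) = length (sigma01 w)"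
proof (induction w)
  case (Cons a w) then show ?case by (cases a) simp_all
qed simp

lemma set_sigma01: "set (sigma01 w) \<subseteq> {0, 1}"
proof (induction w)
  case (Cons a w) then show ?case by (cases a) auto
qed simp

lemma set_sigma10: "set (sigma10 w) \<subseteq> {0, 1}"
proof (induction w)
  case (Cons a w) then show ?case by (cases a) auto
qed simp

text \<open>The pair (0, 1) occurs in zip (sigma01 w) (sigma10 w) exactly where the image of a
  letter B begins.\<close>

definition B_starts :: "abc list \<Rightarrow> nat set" where
  "B_starts w = {i. i < length (sigma01 w) \<and> sigma01 w ! i = 0 \<and> sigma10 w ! i = 1}"

lemma B_starts_Cons:
  "B_starts (a # w) = (if a = B then {0} else {}) \<union> (\<lambda>i. i + length (s01 a)) ` B_starts w"
proof (cases a)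
  case A
  have "i \<in> B_starts (a # w) \<longleftrightarrow> i \<in> Suc ` B_starts w" for i
    using A by (cases i) (auto simp: B_starts_def)
  then show ?thesis using A by auto
next
  case B
  have "i \<in> B_starts (a # w) \<longleftrightarrow> i = 0 \<or> i \<in> (\<lambda>i. i + 2) ` B_starts w" for i
    using B by (cases i; cases "i - 1") (auto simp: B_starts_def length_sigma10 image_iff)
  then show ?thesis using B by auto
next
  case C
  have "i \<in> B_starts (a # w) \<longleftrightarrow> i \<in> Suc ` B_starts w" for i
    using C by (cases i) (auto simp: B_starts_def)
  then show ?thesis using C by auto
qed

lemma card_B_starts: "card (B_starts w) = count_list w B"
proof (induction w)
  case (Cons a w)
  let ?shift = "\<lambda>i. i + length (s01 a)"
  have "finite (B_starts w)" by (simp add: B_starts_def)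
  moreover have "0 \<notin> ?shift ` B_starts w" by (cases a) auto
  moreover have "card (?shift ` B_starts w) = card (B_starts w)"
    by (rule card_image) (simp add: inj_on_def)
  ultimately have "card (B_starts (a # w)) = (if a = B then 1 else 0) + card (B_starts w)"
    unfolding B_starts_Cons by (subst card_Un_disjoint) auto
  with Cons.IH show ?case by simp
qed (simp add: B_starts_def)

lemma B_start_next:
  "k \<in> B_starts w \<Longrightarrow> Suc k < length (sigma01 w) \<and> sigma01 w ! Suc k = 1 \<and> sigma10 w ! Suc k = 0"
proof (induction w arbitrary: k)
  case (Cons a w)
  from Cons.prems consider "a = B" "k = 0" | i where "i \<in> B_starts w" "k = i + length (s01 a)"
    by (auto simp: B_starts_Cons split: if_splits)
  then show ?case by cases (use Cons.IH in \<open>auto simp: nth_append length_sigma10\<close>)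
qed (simp add: B_starts_def)

lemma B_start_prev:
  assumes "k < length (sigma01 w)" "sigma01 w ! k = 1" "sigma10 w ! k = 0"
  shows "0 < k \<and> k - 1 \<in> B_starts w"
  using assms
proof (induction w arbitrary: k)
  case (Cons a w)
  show ?case
  proof (cases "k < length (s01 a)")
    case True
    with Cons.prems show ?thesis by (cases a; cases k) (auto simp: B_starts_Cons)
  next
    case False
    define i where "i = k - length (s01 a)"
    have k: "k = i + length (s01 a)" using False by (simp add: i_def)
    have "0 < i \<and> i - 1 \<in> B_starts w"
      using Cons.prems by (intro Cons.IH) (auto simp: k nth_append length_sigma10)
    then show ?thesis by (auto simp: k B_starts_Cons intro!: image_eqI[where x = "i - 1"])
  qed
qed simp

lemma sigma_diff_iff:
  assumes "k < length (sigma01 w)"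
  shows "sigma01 w ! k \<noteq> sigma10 w ! k \<longleftrightarrow> k \<in> B_starts w \<or> k \<in> Suc ` B_starts w"
proof
  assume diff: "sigma01 w ! k \<noteq> sigma10 w ! k"
  have "k < length (sigma10 w)" using assms by (simp add: length_sigma10)
  then have "sigma01 w ! k \<in> {0, 1}" "sigma10 w ! k \<in> {0, 1}"
    using nth_mem[OF assms] nth_mem set_sigma01[of w] set_sigma10[of w] by blast+
  with diff consider "sigma01 w ! k = 0" "sigma10 w ! k = 1" | "sigma01 w ! k = 1" "sigma10 w ! k = 0"
    by auto
  then show "k \<in> B_starts w \<or> k \<in> Suc ` B_starts w"
  proof cases
    case 1 then show ?thesis using assms by (simp add: B_starts_def)
  next
    case 2 then show ?thesis using B_start_prev[OF assms] by (auto intro: image_eqI[where x = "k - 1"])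
  qed
next
  show "k \<in> B_starts w \<or> k \<in> Suc ` B_starts w \<Longrightarrow> sigma01 w ! k \<noteq> sigma10 w ! k"
    using B_start_next by (auto simp: B_starts_def)
qed

lemma paired_flips:
  fixes c :: "nat \<Rightarrow> bool" and S :: "nat set"
  assumes flip: "\<And>k. k < n \<Longrightarrow> c (Suc k) \<noteq> c k \<longleftrightarrow> k \<in> S \<or> k \<in> Suc ` S"
    and isolated: "\<And>k. k \<in> S \<Longrightarrow> Suc k \<notin> S"
    and "j \<le> n"
  shows "c j \<longleftrightarrow> c 0 \<noteq> (j \<in> Suc ` S)"
  using \<open>j \<le> n\<close>
proof (induction j)
  case (Suc j)
  have "j \<in> Suc ` S \<Longrightarrow> j \<notin> S" using isolated by auto
  then show ?case using Suc flip[of j] by (auto simp: image_iff)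
qed auto

section \<open>Arcs of the circle\<close>

lemma frac_frac_diff [simp]: "frac (frac x - y) = frac (x - y)"
  using frac_add_simps(1)[of x "- y"] by simp

lemma frac_diff_unit_interval:
  fixes a y :: real
  assumes "0 \<le> a" "a < 1" "0 \<le> y" "y < 1"
  shows "frac (y - a) = (if a \<le> y then y - a else y - a + 1)"
  using assms frac_diff_pos[of a y] frac_diff_neg[of y a] by auto

lemma frac_add_unit_interval:
  fixes a l :: real
  assumes "0 \<le> a" "a < 1" "0 \<le> l" "l < 1"
  shows "frac (a + l) = (if a + l < 1 then a + l else a + l - 1)"
  using assms by (simp add: frac_add)

text \<open>For a, y in [0, 1), frac (y - a) < l says that y lies on the half-open arc of length l
  starting at a on the circle [0, 1).\<close>

lemma arc_membership_change:
  fixes a l y y' :: real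
  assumes "0 \<le> a" "a < 1" "0 < l" "l < 1" "0 \<le> y" "y \<le> y'" "y' < 1"
  shows "(frac (y - a) < l) \<noteq> (frac (y' - a) < l)
    \<longleftrightarrow> (y < a \<and> a \<le> y') \<noteq> (y < frac (a + l) \<and> frac (a + l) \<le> y')"
  using assms by (simp add: frac_diff_unit_interval frac_add_unit_interval) linarith

lemma arc_end_notin_interval:
  fixes a l y y' :: real
  assumes "0 \<le> a" "a < 1" "0 < l" "l < 1" "0 \<le> y" "y < 1" "0 \<le> y'" "y' < 1"
    and "frac (y - a) < l" "\<not> frac (y' - a) < l"
  shows "\<not> (y' < frac (a + l) \<and> frac (a + l) \<le> y)"
  using assms by (simp add: frac_diff_unit_interval frac_add_unit_interval split: if_splits)

section \<open>Codings of the rotation\<close>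

lemma rot_eq_frac:
  assumes "0 < eps" "eps < 1" "0 \<le> x" "x < 1"
  shows "rot eps x = frac (x - eps)"
  using assms frac_diff_unit_interval[of eps x] by (simp add: rot_def)

lemma funpow_frac_shift:
  fixes g :: "real \<Rightarrow> real"
  assumes "\<And>x. 0 \<le> x \<Longrightarrow> x < 1 \<Longrightarrow> g x = frac (x + d)" "0 \<le> x0" "x0 < 1"
  shows "(g ^^ m) x0 = frac (x0 + real m * d)"
proof (induction m)
  case (Suc m)
  have "(g ^^ Suc m) x0 = frac (frac (x0 + real m * d) + d)"
    using Suc assms(1)[of "frac (x0 + real m * d)"] by (simp add: frac_lt_1)
  then show ?case by (simp add: algebra_simps)
qed (use assms in simp)

lemma zpow_on_rot:
  assumes "0 < eps" "eps < 1" "0 \<le> x0" "x0 < 1"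
  shows "zpow_on {0..<1} (rot eps) n x0 = frac (x0 - of_int n * eps)"
proof -
  have rot: "rot eps x = frac (x + - eps)" if "0 \<le> x" "x < 1" for x
    using rot_eq_frac[OF assms(1,2) that] by simp
  have "inj_on (rot eps) {0..<1}"
    using assms by (auto simp: inj_on_def rot_def split: if_splits)
  then have inv: "the_inv_into {0..<1} (rot eps) x = frac (x + eps)" if "0 \<le> x" "x < 1" for x
    using that rot[of "frac (x + eps)"] by (intro the_inv_into_f_eq) (auto simp: frac_lt_1)
  show ?thesis
    using funpow_frac_shift[OF rot assms(3,4)] funpow_frac_shift[OF inv assms(3,4)]
    by (simp add: zpow_on_def)
qed

text \<open>Letter i of the coding of the orbit of y, as the i-th iterate of rot eps maps y to
  frac (y - i eps).\<close>

definition rot_coding :: "real \<Rightarrow> nat \<Rightarrow> real \<Rightarrow> nat list" where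
  "rot_coding eps M y = map (\<lambda>i. if frac (y - real i * eps) < eps then 0 else 1) [0..<M]"

lemma length_rot_coding [simp]: "length (rot_coding eps M y) = M"
  by (simp add: rot_coding_def)

lemma nth_rot_coding:
  "k < M \<Longrightarrow> rot_coding eps M y ! k = (if frac (y - real k * eps) < eps then 0 else 1)"
  by (simp add: rot_coding_def)

lemma LM_subset_rot_coding:
  assumes "0 < eps" "eps < 1" "0 \<le> x0" "x0 < 1"
  shows "LM eps x0 M \<subseteq> rot_coding eps M ` {0..<1}"
proof
  fix u assume "u \<in> LM eps x0 M"
  then obtain k where u: "u = map (\<lambda>i. rot_word eps x0 (k + int i)) [0..<M]"
    by (auto simp: LM_def)
  define y where "y = frac (x0 - of_int k * eps)"
  have "frac (x0 - of_int (k + int i) * eps) = frac (y - real i * eps)" for i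
    unfolding y_def by (simp add: algebra_simps)
  then have "u = rot_coding eps M y"
    by (simp add: u rot_coding_def rot_word_def zpow_on_rot[OF assms])
  moreover have "y \<in> {0..<1}" by (simp add: y_def frac_lt_1)
  ultimately show "u \<in> rot_coding eps M ` {0..<1}" by blast
qed

definition cuts_between :: "real \<Rightarrow> nat \<Rightarrow> real \<Rightarrow> real \<Rightarrow> nat set" where
  "cuts_between eps M y y' = {j. j \<le> M \<and> y < frac (real j * eps) \<and> frac (real j * eps) \<le> y'}"

definition cut_rank :: "real \<Rightarrow> nat \<Rightarrow> real \<Rightarrow> nat" where
  "cut_rank eps M y = card {j. j \<le> M \<and> frac (real j * eps) \<le> y}"

lemma finite_cuts_between [simp]: "finite (cuts_between eps M y y')"
  by (rule finite_subset[of _ "{..M}"]) (auto simp: cuts_between_def)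

lemma cut_rank_add:
  assumes "y \<le> y'"
  shows "cut_rank eps M y' = cut_rank eps M y + card (cuts_between eps M y y')"
proof -
  have "{j. j \<le> M \<and> frac (real j * eps) \<le> y'}
      = {j. j \<le> M \<and> frac (real j * eps) \<le> y} \<union> cuts_between eps M y y'"
    using assms by (auto simp: cuts_between_def)
  moreover have "card ({j. j \<le> M \<and> frac (real j * eps) \<le> y} \<union> cuts_between eps M y y')
      = cut_rank eps M y + card (cuts_between eps M y y')"
    unfolding cut_rank_def by (rule card_Un_disjoint) (auto simp: cuts_between_def)
  ultimately show ?thesis by (simp add: cut_rank_def)
qed

lemma cut_rank_bounds:
  assumes "0 \<le> y"
  shows "1 \<le> cut_rank eps M y" "cut_rank eps M y \<le> M + 1"
proof -
  have fin: "finite {j. j \<le> M \<and> frac (real j * eps) \<le> y}" by simp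
  have "0 \<in> {j. j \<le> M \<and> frac (real j * eps) \<le> y}" using assms by simp
  then show "1 \<le> cut_rank eps M y" unfolding cut_rank_def using fin
    by (metis One_nat_def Suc_leI card_gt_0_iff empty_iff)
  have "cut_rank eps M y \<le> card {..M}" unfolding cut_rank_def by (rule card_mono) auto
  then show "cut_rank eps M y \<le> M + 1" by simp
qed

lemma two_le_cut_rank_last:
  assumes "0 < M"
  shows "2 \<le> cut_rank eps M (frac (real M * eps))"
proof -
  have "{0, M} \<subseteq> {j. j \<le> M \<and> frac (real j * eps) \<le> frac (real M * eps)}" by auto
  from card_mono[OF _ this] assms show ?thesis by (simp add: cut_rank_def)
qed

lemma frac_next_cut: "frac (frac (real k * eps) + eps) = frac (real (Suc k) * eps)"
  by (simp add: algebra_simps)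

lemma rot_coding_change:
  assumes "0 < eps" "eps < 1" "0 \<le> y" "y \<le> y'" "y' < 1" "k < M"
  shows "rot_coding eps M y ! k \<noteq> rot_coding eps M y' ! k
    \<longleftrightarrow> (k \<in> cuts_between eps M y y') \<noteq> (Suc k \<in> cuts_between eps M y y')"
proof -
  from arc_membership_change[of "frac (real k * eps)" eps y y'] assms
  have "(frac (y - real k * eps) < eps) \<noteq> (frac (y' - real k * eps) < eps)
    \<longleftrightarrow> (y < frac (real k * eps) \<and> frac (real k * eps) \<le> y')
      \<noteq> (y < frac (real (Suc k) * eps) \<and> frac (real (Suc k) * eps) \<le> y')"
    unfolding frac_next_cut frac_diff_simp by (simp add: frac_lt_1)
  with assms show ?thesis by (auto simp: nth_rot_coding cuts_between_def)
qed

lemma rot_coding_rise_no_cut: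
  assumes "0 < eps" "eps < 1" "0 \<le> y" "y < 1" "0 \<le> y'" "y' < 1" "k < M"
    and "rot_coding eps M y ! k = 0" "rot_coding eps M y' ! k = 1"
  shows "Suc k \<notin> cuts_between eps M y' y"
proof -
  from assms have "frac (y - real k * eps) < eps" "\<not> frac (y' - real k * eps) < eps"
    by (simp_all add: nth_rot_coding split: if_splits)
  with arc_end_notin_interval[of "frac (real k * eps)" eps y y'] assms
  have "\<not> (y' < frac (real (Suc k) * eps) \<and> frac (real (Suc k) * eps) \<le> y)"
    unfolding frac_next_cut frac_diff_simp by (simp add: frac_lt_1)
  then show ?thesis by (simp add: cuts_between_def)
qed

lemma rot_coding_eq_if_no_cuts:
  assumes "0 < eps" "eps < 1" "0 \<le> y" "y \<le> y'" "y' < 1" "cuts_between eps M y y' = {}"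
  shows "rot_coding eps M y = rot_coding eps M y'"
proof (rule nth_equalityI)
  fix k assume "k < length (rot_coding eps M y)"
  then show "rot_coding eps M y ! k = rot_coding eps M y' ! k"
    using rot_coding_change[OF assms(1-5), of k] assms(6) by auto
qed simp

lemma rot_coding_eq_if_cut_rank_eq:
  assumes "0 < eps" "eps < 1" "y \<in> {0..<1}" "y' \<in> {0..<1}"
    and "cut_rank eps M y = cut_rank eps M y'"
  shows "rot_coding eps M y = rot_coding eps M y'"
  using assms
proof (induction y y' rule: linorder_wlog)
  case (le y y')
  then have "cuts_between eps M y y' = {}" using cut_rank_add[OF le(1), of eps M] by simp
  with le show ?case by (intro rot_coding_eq_if_no_cuts) auto
qed (simp add: eq_commute)

definition coding_of_rank :: "real \<Rightarrow> nat \<Rightarrow> nat \<Rightarrow> nat list" where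
  "coding_of_rank eps M n = rot_coding eps M (inv_into {0..<1} (cut_rank eps M) n)"

lemma coding_of_rank_cut_rank:
  assumes "0 < eps" "eps < 1" "y \<in> {0..<1}"
  shows "coding_of_rank eps M (cut_rank eps M y) = rot_coding eps M y"
proof -
  have "inv_into {0..<1} (cut_rank eps M) (cut_rank eps M y) \<in> {0..<1}"
    using assms(3) by (intro inv_into_into) simp
  with assms show ?thesis unfolding coding_of_rank_def
    by (intro rot_coding_eq_if_cut_rank_eq) (auto intro: f_inv_into_f)
qed

section \<open>Amicable pairs\<close>

lemma cuts_between_eq_B_starts:
  assumes "0 < eps" "eps < 1" "0 \<le> y" "y \<le> y'" "y' < 1"
    and len: "length (sigma01 w) = M"
    and diff: "\<And>k. k < M \<Longrightarrow>
      rot_coding eps M y ! k \<noteq> rot_coding eps M y' ! k \<longleftrightarrow> sigma01 w ! k \<noteq> sigma10 w ! k"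
  shows "cuts_between eps M y y' = Suc ` B_starts w"
proof -
  let ?c = "\<lambda>j. j \<in> cuts_between eps M y y'"
  have "?c j \<longleftrightarrow> ?c 0 \<noteq> (j \<in> Suc ` B_starts w)" if "j \<le> M" for j
  proof (rule paired_flips[OF _ _ that])
    fix k assume "k < M"
    then show "?c (Suc k) \<noteq> ?c k \<longleftrightarrow> k \<in> B_starts w \<or> k \<in> Suc ` B_starts w"
      using rot_coding_change[OF assms(1-5)] diff sigma_diff_iff len by auto
  qed (use B_start_next in \<open>fastforce simp: B_starts_def\<close>)
  moreover have "\<not> ?c 0" using assms(3) by (simp add: cuts_between_def)
  moreover have "Suc ` B_starts w \<subseteq> {..M}" using B_start_next len by fastforce
  ultimately show ?thesis by (auto simp: cuts_between_def)
qed

lemma amicable_codings_cuts: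
  assumes eps: "0 < eps" "eps < 1" and y: "0 \<le> y" "y < 1" "0 \<le> y'" "y' < 1"
    and u: "rot_coding eps M y = sigma01 w" and v: "rot_coding eps M y' = sigma10 w"
    and "B \<in> set w"
  shows "y < y' \<and> cuts_between eps M y y' = Suc ` B_starts w"
proof -
  have len: "length (sigma01 w) = M" using u by (metis length_rot_coding)
  have "B_starts w \<noteq> {}"
    using \<open>B \<in> set w\<close> card_B_starts[of w] by (metis card.empty count_list_0_iff)
  then obtain k where k: "k \<in> B_starts w" by blast
  then have "k < M" "sigma01 w ! k = 0" "sigma10 w ! k = 1" using len by (auto simp: B_starts_def)
  have "\<not> y' < y"
  proof
    assume "y' < y"
    then have "cuts_between eps M y' y = Suc ` B_starts w"
      using cuts_between_eq_B_starts[OF eps y(3) _ y(2) len] u v by (simp add: eq_commute)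
    with k have "Suc k \<in> cuts_between eps M y' y" by blast
    moreover have "Suc k \<notin> cuts_between eps M y' y"
      using rot_coding_rise_no_cut[OF eps y \<open>k < M\<close>] u v k by (simp add: B_starts_def)
    ultimately show False by blast
  qed
  moreover have "y \<noteq> y'" using u v \<open>sigma01 w ! k = 0\<close> \<open>sigma10 w ! k = 1\<close> by force
  ultimately have "y < y'" by simp
  with cuts_between_eq_B_starts[OF eps y(1) _ y(4) len] u v show ?thesis by simp
qed

lemma amicable_codings_cut_ranks:
  assumes eps: "0 < eps" "eps < 1" and y: "0 \<le> y" "y < 1" "0 \<le> y'" "y' < 1"
    and u: "rot_coding eps M y = sigma01 w" and v: "rot_coding eps M y' = sigma10 w"
    and "count_list w B = b" "1 \<le> b"
  defines "r \<equiv> cut_rank eps M (frac (real M * eps))"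
  shows "cut_rank eps M y' = cut_rank eps M y + b
    \<and> \<not> (cut_rank eps M y < r \<and> r \<le> cut_rank eps M y')"
proof -
  have "B \<in> set w" using assms by (metis count_list_0_iff not_one_le_zero)
  with amicable_codings_cuts[OF eps y u v]
  have "y < y'" and cuts: "cuts_between eps M y y' = Suc ` B_starts w" by auto
  have "card (cuts_between eps M y y') = b"
    using cuts assms card_B_starts by (simp add: card_image)
  then have rank: "cut_rank eps M y' = cut_rank eps M y + b"
    using cut_rank_add[of y y'] \<open>y < y'\<close> by simp
  have "length (sigma01 w) = M" using u by (metis length_rot_coding)
  then have "M \<notin> cuts_between eps M y y'" using cuts B_start_next by fastforce
  then consider "frac (real M * eps) \<le> y" | "y' < frac (real M * eps)"
    by (fastforce simp: cuts_between_def)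
  then have "\<not> (cut_rank eps M y < r \<and> r \<le> cut_rank eps M y')"
  proof cases
    case 1 then show ?thesis using cut_rank_add[OF 1] by (simp add: r_def)
  next
    case 2
    then have "M \<in> cuts_between eps M y' (frac (real M * eps))" by (simp add: cuts_between_def)
    then have "card (cuts_between eps M y' (frac (real M * eps))) \<noteq> 0" by auto
    then show ?thesis using cut_rank_add[of y' "frac (real M * eps)" eps M] 2 by (simp add: r_def)
  qed
  with rank show ?thesis by simp
qed

lemma card_windows_avoiding:
  fixes r b M :: nat
  assumes "2 \<le> r" "r \<le> M + 1" "1 \<le> b" "b \<le> M"
  shows "card {n \<in> {1..M + 1 - b}. \<not> (n < r \<and> r \<le> n + b)} \<le> M - b"
proof -
  define x where "x = max 1 (r - b)"
  have x: "x \<in> {1..M + 1 - b}" "x < r" "r \<le> x + b" using assms by (auto simp: x_def)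
  then have "{n \<in> {1..M + 1 - b}. \<not> (n < r \<and> r \<le> n + b)} \<subseteq> {1..M + 1 - b} - {x}"
    by auto
  moreover have "card ({1..M + 1 - b} - {x}) = M - b"
    using x(1) assms by (simp add: card_Diff_singleton)
  ultimately show ?thesis by (metis card_mono finite_Diff finite_atLeastAtMost)
qed

theorem mainTheorem6:
  fixes eps x0 :: real and b M :: nat
  assumes "eps \<notin> \<rat>" "0 < eps" "eps < 1" "0 \<le> x0" "x0 < 1"
    and "1 \<le> b" "2 * b \<le> M"
  shows "finite {(w1, w2). amicable b w1 w2 \<and> w1 \<in> LM eps x0 M \<and> w2 \<in> LM eps x0 M}
    \<and> card {(w1, w2). amicable b w1 w2 \<and> w1 \<in> LM eps x0 M \<and> w2 \<in> LM eps x0 M} \<le> M - b"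
proof -
  note eps = assms(2,3)
  define r where "r = cut_rank eps M (frac (real M * eps))"
  define S where "S = {n \<in> {1..M + 1 - b}. \<not> (n < r \<and> r \<le> n + b)}"
  define pair where "pair n = (coding_of_rank eps M n, coding_of_rank eps M (n + b))" for n
  have "(w1, w2) \<in> pair ` S"
    if amic: "amicable b w1 w2" and factors: "w1 \<in> LM eps x0 M" "w2 \<in> LM eps x0 M" for w1 w2
  proof -
    obtain w where w: "count_list w B = b" "w1 = sigma01 w" "w2 = sigma10 w"
      using amic unfolding amicable_def by blast
    obtain y y' where y: "y \<in> {0..<1}" "w1 = rot_coding eps M y"
      and y': "y' \<in> {0..<1}" "w2 = rot_coding eps M y'"
      using factors LM_subset_rot_coding[OF eps assms(4,5)] by blast
    have ranks: "cut_rank eps M y' = cut_rank eps M y + b"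
      "\<not> (cut_rank eps M y < r \<and> r \<le> cut_rank eps M y')"
      using amicable_codings_cut_ranks[OF eps _ _ _ _ _ _ w(1) assms(6)] y y' w by (auto simp: r_def)
    then have "cut_rank eps M y \<in> S"
      using cut_rank_bounds[of y eps M] cut_rank_bounds[of y' eps M] y y' by (simp add: S_def)
    moreover have "(w1, w2) = pair (cut_rank eps M y)"
      using coding_of_rank_cut_rank[OF eps y(1)] coding_of_rank_cut_rank[OF eps y'(1)] y y'
      by (simp add: pair_def ranks(1)[symmetric])
    ultimately show ?thesis by blast
  qed
  then have pairs:
    "{(w1, w2). amicable b w1 w2 \<and> w1 \<in> LM eps x0 M \<and> w2 \<in> LM eps x0 M} \<subseteq> pair ` S"
    by blast
  have "finite S" by (simp add: S_def)
  moreover have "card S \<le> M - b" unfolding S_def r_def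
    using assms two_le_cut_rank_last[of M eps] cut_rank_bounds[of "frac (real M * eps)" eps M]
    by (intro card_windows_avoiding) simp_all
  ultimately show ?thesis using finite_surj[OF _ pairs] surj_card_le[OF _ pairs] by simp
qed

end
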